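(* Let $L\ge 2$ and let $M_1,\dots,M_L$ be pairwise distinct positive integers. Let $N$ be an integer with $0\le N<\operatorname{lcm}(M_1,\dots,M_L)$, and for $1\le i\le L$ let $r_i\in\{0,\dots,M_i-1\}$ be the remainder of $N$ modulo $M_i$ and $n_i=(N-r_i)/M_i$. Let $\tilde r_1,\dots,\tilde r_L$ be integers with $0\le\tilde r_i\le M_i-1$, and let $\tau_1,\dots,\tau_L\ge0$ with $|\tilde r_i-r_i|\le\tau_i$. Let $k$ be an index with $$\min_{j\ne k}\frac{\gcd(M_k,M_j)}{4}=\max_{1\le i\le L}\min_{j\ne i}\frac{\gcd(M_i,M_j)}{4},$$ and suppose $\tau_k<\min_{j\ne k}\gcd(M_k,M_j)/4$ and, for every $i\ne k$, $$\tau_i\le\frac{\gcd(M_k,M_i)}{2}-\min_{j\ne k}\frac{\gcd(M_k,M_j)}{4}.$$ Then the single-stage algorithm (described in the context) run on the moduli $M_1,\dots,M_L$ with reference index $k$ and inputs $\tilde r_1,\dots,\tilde r_L$ outputs $\hat n_i=n_i$ for all $1\le i\le L$.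
   Context: For $x\in\mathbb R$, $[x]$ denotes the unique integer with $-1/2\le x-[x]<1/2$. Single-stage algorithm: let $P_1,\dots,P_m$ ($m\ge2$) be pairwise distinct positive integers, $k\in\{1,\dots,m\}$ a reference index, and $x_1,\dots,x_m$ integers. For each $i\ne k$ put $m_{ki}=\gcd(P_k,P_i)$, $\Gamma_{ki}=P_k/m_{ki}$, $\Gamma_{ik}=P_i/m_{ki}$, $\hat q_{ik}=[(x_i-x_k)/m_{ki}]$; let $\bar\Gamma_{ki}$ be a multiplicative inverse of $\Gamma_{ki}$ modulo $\Gamma_{ik}$, and let $\hat\xi_{ik}\in\{0,\dots,\Gamma_{ik}-1\}$ with $\hat\xi_{ik}\equiv\hat q_{ik}\bar\Gamma_{ki}\pmod{\Gamma_{ik}}$. Let $\hat n_k$ be the least nonnegative integer $y$ with $y\equiv\hat\xi_{ik}\pmod{\Gamma_{ik}}$ for all $i\ne k$ (if no such $y$ exists the algorithm fails). For $i\ne k$ set $\hat n_i=(\hat n_k\Gamma_{ki}-\hat q_{ik})/\Gamma_{ik}$. Outputs: $\hat n_1,\dots,\hat n_m$ and the estimate $[\frac1m\sum_{i=1}^m(\hat n_iP_i+x_i)]$. *)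

theory Defs
  imports "HOL-Number_Theory.Number_Theory"
begin

definition rnd :: "real \<Rightarrow> int" where
  "rnd x = (THE z. -1/2 \<le> x - real_of_int z \<and> x - real_of_int z < 1/2)"

definition ss_Gamma :: "(nat \<Rightarrow> int) \<Rightarrow> nat \<Rightarrow> nat \<Rightarrow> int" where
  "ss_Gamma P a b = P a div gcd (P a) (P b)"

definition ss_q :: "(nat \<Rightarrow> int) \<Rightarrow> (nat \<Rightarrow> int) \<Rightarrow> nat \<Rightarrow> nat \<Rightarrow> int" where
  "ss_q P x k i = rnd (real_of_int (x i - x k) / real_of_int (gcd (P k) (P i)))"

definition ss_inv :: "(nat \<Rightarrow> int) \<Rightarrow> nat \<Rightarrow> nat \<Rightarrow> int" where
  "ss_inv P k i = (SOME g. [ss_Gamma P k i * g = 1] (mod ss_Gamma P i k))"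

definition ss_xi :: "(nat \<Rightarrow> int) \<Rightarrow> (nat \<Rightarrow> int) \<Rightarrow> nat \<Rightarrow> nat \<Rightarrow> int" where
  "ss_xi P x k i = (ss_q P x k i * ss_inv P k i) mod ss_Gamma P i k"

definition ss_nk :: "(nat \<Rightarrow> int) \<Rightarrow> (nat \<Rightarrow> int) \<Rightarrow> nat \<Rightarrow> nat \<Rightarrow> int option" where
  "ss_nk P x m k =
    (if \<exists>y::nat. \<forall>i\<in>{1..m} - {k}. [int y = ss_xi P x k i] (mod ss_Gamma P i k)
     then Some (int (LEAST y::nat. \<forall>i\<in>{1..m} - {k}. [int y = ss_xi P x k i] (mod ss_Gamma P i k)))
     else None)"

text \<open>Outputs hat n_1..hat n_m (as a function on indices; values outside 1..m irrelevant),
  or None if the algorithm fails.\<close>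
definition single_stage :: "(nat \<Rightarrow> int) \<Rightarrow> (nat \<Rightarrow> int) \<Rightarrow> nat \<Rightarrow> nat \<Rightarrow> (nat \<Rightarrow> int) option" where
  "single_stage P x m k =
    (case ss_nk P x m k of None \<Rightarrow> None
     | Some nk \<Rightarrow> Some (\<lambda>i. if i = k then nk
                        else (nk * ss_Gamma P k i - ss_q P x k i) div ss_Gamma P i k))"

definition ss_mu :: "(nat \<Rightarrow> int) \<Rightarrow> nat \<Rightarrow> nat \<Rightarrow> real" where
  "ss_mu M L i = Min ((\<lambda>j. real_of_int (gcd (M i) (M j)) / 4) ` ({1..L} - {i}))"

end

theory Submission
  imports Defs
begin

text \<open>Write n_i = N div M_i and g = gcd M_k M_i. The true remainders satisfy
  r_i - r_k = n_k M_k - n_i M_i, a multiple of g; since the reading errors add up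
  to less than g/2, rounding (rt_i - rt_k)/g recovers q_ik = n_k \<Gamma>_ki - n_i \<Gamma>_ik
  exactly. Hence every residue \<xi>_ik is n_k modulo \<Gamma>_ik, so n_k solves the
  congruence system, and it is the least nonnegative solution: for a smaller one y,
  (n_k - y) M_k would be a positive common multiple of all M_i not exceeding N, below
  their lcm. The other n_i are then read off from q_ik.\<close>

lemma rnd_eqI:
  assumes "\<bar>x - real_of_int z\<bar> < 1/2"
  shows "rnd x = z"
  unfolding rnd_def
proof (rule the_equality)
  show "-1/2 \<le> x - real_of_int z \<and> x - real_of_int z < 1/2" using assms by linarith
next
  fix z' assume "-1/2 \<le> x - real_of_int z' \<and> x - real_of_int z' < 1/2"
  with assms have "-1 < real_of_int (z' - z)" "real_of_int (z' - z) < 1"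
    unfolding of_int_diff by linarith+
  then show "z' = z" by linarith
qed

lemma rnd_remainder_diff:
  fixes a b N x y :: int and s t :: real
  assumes "a > 0" "b > 0"
    and "\<bar>real_of_int (x - N mod a)\<bar> \<le> s" "\<bar>real_of_int (y - N mod b)\<bar> \<le> t"
    and "s + t < real_of_int (gcd a b) / 2"
  shows "rnd (real_of_int (y - x) / real_of_int (gcd a b))
           = N div a * (a div gcd a b) - N div b * (b div gcd a b)"
proof -
  define g where "g = gcd a b"
  define z where "z = N div a * (a div g) - N div b * (b div g)"
  define e where "e = (y - N mod b) - (x - N mod a)"
  have g: "real_of_int g > 0" using assms(1) by (simp add: g_def)
  have "a div g * g = a" "b div g * g = b" by (simp_all add: g_def)
  then have "z * g = N div a * a - N div b * b" unfolding z_def by (metis left_diff_distrib mult.assoc)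
  then have "y - x = e + z * g" unfolding e_def by (simp add: minus_div_mult_eq_mod[symmetric])
  then have "real_of_int (y - x) / real_of_int g - real_of_int z = real_of_int e / real_of_int g"
    using g by (simp add: field_simps)
  moreover have "\<bar>real_of_int e\<bar> < real_of_int g / 2"
    using assms(3-5) unfolding e_def g_def by linarith
  ultimately have "\<bar>real_of_int (y - x) / real_of_int g - real_of_int z\<bar> < 1/2"
    using g by (simp add: abs_divide divide_less_eq)
  then show ?thesis unfolding g_def z_def by (rule rnd_eqI)
qed

lemma ss_Gamma_pos:
  assumes "P a > 0"
  shows "ss_Gamma P a b > 0"
proof -
  have "gcd (P a) (P b) \<le> P a" using assms by (simp add: zdvd_imp_le)
  then show ?thesis using assms unfolding ss_Gamma_def by (simp add: pos_imp_zdiv_pos_iff)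
qed

lemma ss_xi_cong:
  assumes "P k > 0" "P i > 0"
    and "ss_q P x k i = n * ss_Gamma P k i - n' * ss_Gamma P i k"
  shows "[n = ss_xi P x k i] (mod ss_Gamma P i k)"
proof -
  let ?G = "ss_Gamma P k i" and ?G' = "ss_Gamma P i k" and ?v = "ss_inv P k i"
  have "coprime ?G ?G'"
    unfolding ss_Gamma_def using div_gcd_coprime[of "P k" "P i"] assms(1)
    by (simp add: gcd.commute)
  then have "\<exists>v. [?G * v = 1] (mod ?G')" by (rule cong_solve_coprime_int)
  then have inv: "[?G * ?v = 1] (mod ?G')" unfolding ss_inv_def by (rule someI_ex)
  have "[ss_q P x k i = n * ?G] (mod ?G')"
    unfolding assms(3) cong_iff_dvd_diff by simp
  then have "[ss_q P x k i * ?v = n * (?G * ?v)] (mod ?G')"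
    by (metis cong_scalar_right mult.assoc)
  also have "[n * (?G * ?v) = n * 1] (mod ?G')"
    using inv by (rule cong_scalar_left)
  finally show ?thesis
    unfolding ss_xi_def by (simp add: cong_def)
qed

lemma div_le_of_cong_cofactors:
  fixes M :: "nat \<Rightarrow> int"
  assumes "k \<in> A" "\<forall>i\<in>A. M i > 0" "0 \<le> N" "N < Lcm (M ` A)" "0 \<le> y"
    and "\<forall>i\<in>A - {k}. [y = N div M k] (mod M i div gcd (M k) (M i))"
  shows "N div M k \<le> y"
proof (rule ccontr)
  assume "\<not> N div M k \<le> y"
  then have lt: "y < N div M k" by simp
  have Mk: "M k > 0" using assms(1,2) by blast
  define d where "d = (y - N div M k) * M k"
  have "M i dvd d" if "i \<in> A" for i
  proof (cases "i = k")
    case False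
    let ?g = "gcd (M k) (M i)"
    have "M i div ?g dvd y - N div M k"
      using assms(6) that False by (simp add: cong_iff_dvd_diff)
    then have "M i div ?g * ?g dvd (y - N div M k) * (M k div ?g * ?g)"
      by (intro mult_dvd_mono) simp_all
    then show ?thesis unfolding d_def by simp
  qed (simp add: d_def)
  then have "Lcm (M ` A) dvd d" by (auto intro: Lcm_least)
  moreover have "d \<noteq> 0" using lt Mk unfolding d_def by simp
  ultimately have "\<bar>Lcm (M ` A)\<bar> \<le> \<bar>d\<bar>" by (rule dvd_imp_le_int[rotated])
  also have "\<bar>d\<bar> = (N div M k - y) * M k" using lt Mk unfolding d_def
    by (simp add: abs_mult)
  also have "\<dots> \<le> N div M k * M k" using Mk assms(5) by simp
  also have "\<dots> \<le> N" using pos_mod_sign[OF Mk, of N] minus_mod_eq_div_mult[of N "M k"] by linarith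
  finally show False using assms(4) by linarith
qed

lemma ss_nk_eqI:
  assumes "0 \<le> n" "\<forall>i\<in>{1..m} - {k}. [n = ss_xi P x k i] (mod ss_Gamma P i k)"
    and "\<And>y. \<forall>i\<in>{1..m} - {k}. [int y = ss_xi P x k i] (mod ss_Gamma P i k) \<Longrightarrow> n \<le> int y"
  shows "ss_nk P x m k = Some n"
proof -
  let ?S = "\<lambda>y::nat. \<forall>i\<in>{1..m} - {k}. [int y = ss_xi P x k i] (mod ss_Gamma P i k)"
  have sol: "?S (nat n)" using assms(1,2) by simp
  then have "\<exists>y. ?S y" by blast
  moreover have "(LEAST y. ?S y) = nat n"
    by (rule Least_equality) (use assms sol in force)+
  ultimately show ?thesis unfolding ss_nk_def using assms(1) by simp
qed

lemma single_stage_eq_quotients: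
  fixes P x :: "nat \<Rightarrow> int"
  assumes "k \<in> {1..m}" "\<forall>i\<in>{1..m}. P i > 0" "0 \<le> N" "N < Lcm (P ` {1..m})"
    and q: "\<forall>i\<in>{1..m} - {k}.
              ss_q P x k i = N div P k * ss_Gamma P k i - N div P i * ss_Gamma P i k"
  shows "\<exists>nh. single_stage P x m k = Some nh \<and> (\<forall>i\<in>{1..m}. nh i = N div P i)"
proof -
  let ?n = "\<lambda>i. N div P i"
  have Pk: "P k > 0" using assms(1,2) by blast
  have xi: "[?n k = ss_xi P x k i] (mod ss_Gamma P i k)" if i: "i \<in> {1..m} - {k}" for i
    using Pk assms(2) q i by (intro ss_xi_cong) auto
  have "ss_nk P x m k = Some (?n k)"
  proof (rule ss_nk_eqI)
    show "0 \<le> ?n k" using Pk assms(3) by (simp add: pos_imp_zdiv_nonneg_iff)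
    show "\<forall>i\<in>{1..m} - {k}. [?n k = ss_xi P x k i] (mod ss_Gamma P i k)" using xi by blast
  next
    fix y assume y: "\<forall>i\<in>{1..m} - {k}. [int y = ss_xi P x k i] (mod ss_Gamma P i k)"
    have "\<forall>i\<in>{1..m} - {k}. [int y = ?n k] (mod P i div gcd (P k) (P i))"
    proof
      fix i assume "i \<in> {1..m} - {k}"
      from cong_trans[OF bspec[OF y this] cong_sym[OF xi[OF this]]]
      show "[int y = ?n k] (mod P i div gcd (P k) (P i))" by (simp add: ss_Gamma_def gcd.commute)
    qed
    then show "?n k \<le> int y"
      using assms(1-4) by (intro div_le_of_cong_cofactors) auto
  qed
  moreover have "(?n k * ss_Gamma P k i - ss_q P x k i) div ss_Gamma P i k = ?n i"
    if "i \<in> {1..m} - {k}" for i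
    using q that assms(2) ss_Gamma_pos[of P i k] by simp
  ultimately show ?thesis
    unfolding single_stage_def by auto
qed

theorem corollary3:
  fixes L k :: nat and M rt :: "nat \<Rightarrow> int" and N :: int and tau :: "nat \<Rightarrow> real"
  assumes "L \<ge> 2"
    and "\<forall>i\<in>{1..L}. M i > 0"
    and "inj_on M {1..L}"
    and "0 \<le> N" and "N < Lcm (M ` {1..L})"
    and "\<forall>i\<in>{1..L}. 0 \<le> rt i \<and> rt i \<le> M i - 1"
    and "\<forall>i\<in>{1..L}. tau i \<ge> 0 \<and> \<bar>real_of_int (rt i - N mod M i)\<bar> \<le> tau i"
    and "k \<in> {1..L}"
    and "ss_mu M L k = Max (ss_mu M L ` {1..L})"
    and "tau k < ss_mu M L k"
    and "\<forall>i\<in>{1..L} - {k}. tau i \<le> real_of_int (gcd (M k) (M i)) / 2 - ss_mu M L k"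
  shows "\<exists>nh. single_stage M rt L k = Some nh \<and>
           (\<forall>i\<in>{1..L}. nh i = (N - N mod M i) div M i)"
proof -
  have "ss_q M rt k i = N div M k * ss_Gamma M k i - N div M i * ss_Gamma M i k"
    if i: "i \<in> {1..L} - {k}" for i
  proof -
    have "tau i \<le> real_of_int (gcd (M k) (M i)) / 2 - ss_mu M L k" using assms(11) i by blast
    then have "tau k + tau i < real_of_int (gcd (M k) (M i)) / 2" using assms(10) by linarith
    moreover have "M k > 0" "M i > 0" "\<bar>real_of_int (rt i - N mod M i)\<bar> \<le> tau i"
      "\<bar>real_of_int (rt k - N mod M k)\<bar> \<le> tau k"
      using assms(2,7,8) i by auto
    ultimately show ?thesis
      unfolding ss_q_def ss_Gamma_def gcd.commute[of "M i"] by (intro rnd_remainder_diff)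
  qed
  then obtain nh where "single_stage M rt L k = Some nh" "\<forall>i\<in>{1..L}. nh i = N div M i"
    using single_stage_eq_quotients assms(2,4,5,8) by blast
  moreover have "(N - N mod M i) div M i = N div M i" if "i \<in> {1..L}" for i
    using assms(2) that by (simp add: minus_mod_eq_mult_div)
  ultimately show ?thesis by auto
qed

end
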